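(* Let $\mathfrak p=(p_1,p_2,p_3,p_4)$ be a quadruple of distinct points in the Heisenberg group $\mathfrak H$, and let $d_K$ be the Korányi–Cygan metric. Then $$d_K(p_2,p_3)\,d_K(p_1,p_4)\le d_K(p_2,p_4)\,d_K(p_1,p_3)+d_K(p_1,p_2)\,d_K(p_3,p_4),$$ $$d_K(p_1,p_3)\,d_K(p_2,p_4)\le d_K(p_1,p_2)\,d_K(p_3,p_4)+d_K(p_2,p_3)\,d_K(p_1,p_4),$$ $$d_K(p_1,p_2)\,d_K(p_3,p_4)\le d_K(p_1,p_3)\,d_K(p_2,p_4)+d_K(p_2,p_3)\,d_K(p_1,p_4).$$ Moreover: (1) $d_K(p_2,p_3)d_K(p_1,p_4)=d_K(p_2,p_4)d_K(p_1,p_3)+d_K(p_1,p_2)d_K(p_3,p_4)$ if and only if all four points lie on an $\mathbb R$-circle and $p_1$ and $p_4$ separate $p_2$ and $p_3$; (2) $d_K(p_1,p_3)d_K(p_2,p_4)=d_K(p_1,p_2)d_K(p_3,p_4)+d_K(p_2,p_3)d_K(p_1,p_4)$ if and only if all four points lie on an $\mathbb R$-circle and $p_1$ and $p_3$ separate $p_2$ and $p_4$; (3) $d_K(p_1,p_2)d_K(p_3,p_4)=d_K(p_1,p_3)d_K(p_2,p_4)+d_K(p_2,p_3)d_K(p_1,p_4)$ if and only if all four points lie on an $\mathbb R$-circle and $p_1$ and $p_2$ separate $p_3$ and $p_4$.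
   Context: The Heisenberg group $\mathfrak H$ is $\mathbb C\times\mathbb R$ with group law $(z,t)*(w,s)=(z+w,\,t+s+2\,\mathrm{Im}(\overline{w}z))$. The Korányi gauge is $|(z,t)|=\big||z|^2-it\big|^{1/2}$ and the Korányi–Cygan metric is $d_K(p,q)=|p^{-1}*q|$. Let $\mathbb C^{2,1}$ be $\mathbb C^3$ with Hermitian form $\langle\mathbf z,\mathbf w\rangle=z_1\overline{w_3}+z_2\overline{w_2}+z_3\overline{w_1}$, $V_0=\{\mathbf z\neq0:\langle\mathbf z,\mathbf z\rangle=0\}$, $V_-=\{\mathbf z:\langle\mathbf z,\mathbf z\rangle<0\}$, $\mathbb P$ the projectivization to $\mathbb CP^2$, $\mathbf H^2_{\mathbb C}=\mathbb P(V_-)$ and $\partial\mathbf H^2_{\mathbb C}=\mathbb P(V_0)$. The map $(z,t)\mapsto\mathbb P\big([-|z|^2+it,\ \sqrt2 z,\ 1]^T\big)$ identifies $\mathfrak H$ with $\partial\mathbf H^2_{\mathbb C}$ minus the point $\infty=\mathbb P([1,0,0]^T)$. An $\mathbb R$-circle in $\partial\mathbf H^2_{\mathbb C}$ is the boundary of a Lagrangian plane (an isometric image of $\mathbf H^2_{\mathbb R}$ in $\mathbf H^2_{\mathbb C}$), equivalently an image under $\mathrm{PU}(2,1)$ (the projectivized group of linear maps preserving $\langle\cdot,\cdot\rangle$) of $\mathbb P(V_0\cap\mathbb R^3)$; "the points lie on an $\mathbb R$-circle" means their images in $\partial\mathbf H^2_{\mathbb C}$ do (the $\mathbb R$-circle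 may pass through $\infty$). An $\mathbb R$-circle is a topological circle; "$p_a$ and $p_b$ separate $p_c$ and $p_d$" means $p_c,p_d$ lie in different components of the circle (including $\infty$ if it lies on it) with $p_a,p_b$ removed. *)

theory Defs
  imports "HOL-Analysis.Analysis"
begin

type_synonym heis = "complex \<times> real"

definition heis_mult :: "heis \<Rightarrow> heis \<Rightarrow> heis" where
  "heis_mult p q = (fst p + fst q, snd p + snd q + 2 * Im (cnj (fst q) * fst p))"

definition heis_inv :: "heis \<Rightarrow> heis" where
  "heis_inv p = (- fst p, - snd p)"

definition koranyi_gauge :: "heis \<Rightarrow> real" where
  "koranyi_gauge p = sqrt (cmod (complex_of_real ((cmod (fst p))\<^sup>2) - \<i> * complex_of_real (snd p)))"

definition dK :: "heis \<Rightarrow> heis \<Rightarrow> real" where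
  "dK p q = koranyi_gauge (heis_mult (heis_inv p) q)"

definition hform :: "complex^3 \<Rightarrow> complex^3 \<Rightarrow> complex" where
  "hform z w = z$1 * cnj (w$3) + z$2 * cnj (w$2) + z$3 * cnj (w$1)"

definition V0 :: "(complex^3) set" where
  "V0 = {z. z \<noteq> 0 \<and> hform z z = 0}"

text \<open>Linear maps preserving the Hermitian form (the group U(2,1));
  PU(2,1) acts on projective points through these.\<close>
definition unitary21 :: "complex^3^3 \<Rightarrow> bool" where
  "unitary21 A \<longleftrightarrow> (\<forall>z w. hform (A *v z) (A *v w) = hform z w)"

definition real_vecs :: "(complex^3) set" where
  "real_vecs = range (\<lambda>r::real^3. \<chi> i. complex_of_real (r$i))"

text \<open>Concrete model of the boundary P(V_0): the map sending a null vector to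
  the point of the unit sphere S^3 in C x C obtained from the ball model
  (coordinates u=(z1+z3)/sqrt2, v=(z1-z3)/sqrt2, w=z2, in which the form is
  |u|^2+|w|^2-|v|^2).  It is invariant under scaling and induces a
  homeomorphism of P(V_0) (with its topology as a subspace of CP^2) onto S^3;
  the topology of the boundary is taken from this model.\<close>
definition bdry :: "complex^3 \<Rightarrow> complex \<times> complex" where
  "bdry z = ((z$1 + z$3) / (z$1 - z$3), complex_of_real (sqrt 2) * z$2 / (z$1 - z$3))"

definition heis_lift :: "heis \<Rightarrow> complex^3" where
  "heis_lift p = vector [- complex_of_real ((cmod (fst p))\<^sup>2) + \<i> * complex_of_real (snd p),
                         complex_of_real (sqrt 2) * fst p, 1]"

definition heis_bd :: "heis \<Rightarrow> complex \<times> complex" where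
  "heis_bd p = bdry (heis_lift p)"

definition is_Rcircle :: "(complex \<times> complex) set \<Rightarrow> bool" where
  "is_Rcircle R \<longleftrightarrow> (\<exists>A. unitary21 A \<and> R = (\<lambda>x. bdry (A *v x)) ` (V0 \<inter> real_vecs))"

definition separates :: "(complex \<times> complex) set \<Rightarrow> heis \<Rightarrow> heis \<Rightarrow> heis \<Rightarrow> heis \<Rightarrow> bool" where
  "separates R a b c d \<longleftrightarrow>
     heis_bd c \<in> R - {heis_bd a, heis_bd b} \<and> heis_bd d \<in> R - {heis_bd a, heis_bd b} \<and>
     heis_bd d \<notin> connected_component_set (R - {heis_bd a, heis_bd b}) (heis_bd c)"

definition on_Rcircle_sep :: "heis \<Rightarrow> heis \<Rightarrow> heis \<Rightarrow> heis \<Rightarrow> bool" where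
  "on_Rcircle_sep a b c d \<longleftrightarrow>
     (\<exists>R. is_Rcircle R \<and> heis_bd a \<in> R \<and> heis_bd b \<in> R \<and> heis_bd c \<in> R \<and> heis_bd d \<in> R
          \<and> separates R a b c d)"

end

theory Submission
  imports Defs
begin

text \<open>Translating \<open>a\<close> to the origin and applying the Koranyi inversion are both induced by
  elements of \<open>U(2,1)\<close>, and for the standard lifts \<open>dK p q\<^sup>2 = |\<langle>p, q\<rangle>|\<close>.  Hence the images
  \<open>b', c', d'\<close> of \<open>b, c, d\<close> satisfy \<open>dK b c = dK a b * dK a c * dK b' c'\<close>, and the Ptolemaic
  inequality for \<open>a, b, c, d\<close> is the triangle inequality for \<open>b', d', c'\<close>.  Equality in the
  triangle inequality of the Koranyi gauge forces \<open>b', d', c'\<close> to lie in this order on a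
  horizontal line, which is an \<open>\<real>\<close>-circle through \<open>\<infinity>\<close>.  Conversely, on an \<open>\<real>\<close>-circle normalised
  so that \<open>a\<close> is \<open>\<infinity>\<close> and the other points carry real parameters \<open>sb, sc, sd\<close>, the three Ptolemy
  products are proportional to \<open>|sb - sc|\<close>, \<open>|sb - sd|\<close>, \<open>|sc - sd|\<close>, and \<open>a, d\<close> separate
  \<open>b, c\<close> exactly when \<open>sd\<close> lies between \<open>sb\<close> and \<open>sc\<close>.\<close>

section \<open>The Koranyi gauge\<close>

definition complex_gauge :: "heis \<Rightarrow> complex" where
  "complex_gauge p = complex_of_real ((cmod (fst p))\<^sup>2) - \<i> * complex_of_real (snd p)"

lemma Re_complex_gauge [simp]: "Re (complex_gauge p) = (cmod (fst p))\<^sup>2"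
  and Im_complex_gauge [simp]: "Im (complex_gauge p) = - snd p"
  by (simp_all add: complex_gauge_def)

lemma koranyi_gauge_sq: "(koranyi_gauge p)\<^sup>2 = cmod (complex_gauge p)"
  by (simp add: koranyi_gauge_def complex_gauge_def)

lemma koranyi_gauge_nonneg: "koranyi_gauge p \<ge> 0"
  by (simp add: koranyi_gauge_def)

lemma complex_gauge_heis_mult:
  "complex_gauge (heis_mult p q) = complex_gauge p + complex_gauge q + 2 * fst q * cnj (fst p)"
  by (simp add: complex_gauge_def heis_mult_def complex_eq_iff cmod_power2)
    (simp add: algebra_simps power2_eq_square)

lemma heis_mult_inv_cancel: "heis_mult x (heis_mult (heis_inv x) y) = y"
  by (simp add: heis_mult_def heis_inv_def prod_eq_iff algebra_simps)

lemma heis_mult_inv_chain: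
  "heis_mult (heis_mult (heis_inv x) y) (heis_mult (heis_inv y) z) = heis_mult (heis_inv x) z"
  by (simp add: heis_mult_def heis_inv_def prod_eq_iff algebra_simps)

lemma koranyi_gauge_pow4: "(koranyi_gauge p)^4 = (cmod (fst p))^4 + (snd p)\<^sup>2"
proof -
  have "(koranyi_gauge p)^4 = (cmod (complex_gauge p))\<^sup>2"
    by (simp flip: koranyi_gauge_sq power_mult)
  also have "\<dots> = (Re (complex_gauge p))\<^sup>2 + (Im (complex_gauge p))\<^sup>2"
    by (rule cmod_power2)
  also have "\<dots> = (cmod (fst p))^4 + (snd p)\<^sup>2"
    by (simp flip: power_mult)
  finally show ?thesis .
qed

lemma norm_fst_le_koranyi_gauge: "cmod (fst p) \<le> koranyi_gauge p"
proof -
  have "(cmod (fst p))^4 \<le> (koranyi_gauge p)^4"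
    by (simp add: koranyi_gauge_pow4)
  then show ?thesis
    by (rule power_le_imp_le_base[where n = 3, simplified]) (rule koranyi_gauge_nonneg)
qed

lemma norm_fst_eq_koranyi_gauge_iff: "cmod (fst p) = koranyi_gauge p \<longleftrightarrow> snd p = 0"
proof
  assume "cmod (fst p) = koranyi_gauge p"
  then show "snd p = 0"
    using koranyi_gauge_pow4[of p] by simp
next
  assume "snd p = 0"
  then have "(koranyi_gauge p)^4 = (cmod (fst p))^4"
    by (simp add: koranyi_gauge_pow4)
  then show "cmod (fst p) = koranyi_gauge p"
    using koranyi_gauge_nonneg by (simp add: power_eq_iff_eq_base)
qed

lemma koranyi_gauge_eq_0_iff: "koranyi_gauge p = 0 \<longleftrightarrow> p = (0, 0)"
  by (auto simp: koranyi_gauge_def complex_gauge_def complex_eq_iff prod_eq_iff)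

lemma norm_complex_gauge_heis_mult_le:
  "cmod (complex_gauge (heis_mult p q))
     \<le> cmod (complex_gauge p + complex_gauge q) + 2 * cmod (fst p) * cmod (fst q)"
  using norm_triangle_ineq[of "complex_gauge p + complex_gauge q" "2 * fst q * cnj (fst p)"]
  by (simp add: complex_gauge_heis_mult norm_mult mult_ac)

lemma koranyi_gauge_triangle:
  "koranyi_gauge (heis_mult p q) \<le> koranyi_gauge p + koranyi_gauge q"
proof -
  have "cmod (complex_gauge (heis_mult p q))
      \<le> (koranyi_gauge p)\<^sup>2 + (koranyi_gauge q)\<^sup>2 + 2 * cmod (fst p) * cmod (fst q)"
    using norm_complex_gauge_heis_mult_le[of p q] norm_triangle_ineq[of "complex_gauge p" "complex_gauge q"]
    by (simp add: koranyi_gauge_sq)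
  also have "\<dots> \<le> (koranyi_gauge p + koranyi_gauge q)\<^sup>2"
    using mult_mono[OF norm_fst_le_koranyi_gauge norm_fst_le_koranyi_gauge koranyi_gauge_nonneg norm_ge_zero]
    by (simp add: power2_sum)
  finally have "(koranyi_gauge (heis_mult p q))\<^sup>2 \<le> (koranyi_gauge p + koranyi_gauge q)\<^sup>2"
    by (simp add: koranyi_gauge_sq)
  then show ?thesis
    using koranyi_gauge_nonneg by (simp add: power2_le_iff_abs_le)
qed

lemma of_real_add_norm_eq_imp:
  assumes "w > 0" "cmod (complex_of_real w + z) = w + cmod z"
  shows "z = complex_of_real (cmod z)"
proof -
  have "cmod (complex_of_real w) *\<^sub>R z = cmod z *\<^sub>R complex_of_real w"
    using assms by (intro norm_triangle_eq[THEN iffD1]) simp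
  then have "complex_of_real w * z = complex_of_real w * complex_of_real (cmod z)"
    using assms(1) by (simp add: scaleR_conv_of_real mult.commute)
  then show ?thesis
    using assms(1) by simp
qed

lemma mult_cnj_eq_norm_imp_positive_multiple:
  assumes "u * cnj v = complex_of_real (cmod u * cmod v)" "v \<noteq> 0"
  shows "u = complex_of_real (cmod u / cmod v) * v"
proof -
  have prod: "u * (cnj v * v) = complex_of_real (cmod u) * complex_of_real (cmod v) * v"
    using assms(1) by (simp add: mult.assoc[symmetric])
  have "cnj v * v = complex_of_real (cmod v) * complex_of_real (cmod v)"
    by (simp add: mult.commute flip: complex_norm_square power2_eq_square)
  then have "complex_of_real (cmod v) * (u * complex_of_real (cmod v))
      = complex_of_real (cmod v) * (complex_of_real (cmod u) * v)"
    using prod by (simp only: mult_ac)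
  then show ?thesis
    using assms(2) by (simp add: field_simps)
qed

lemma koranyi_gauge_triangle_eq:
  assumes pos: "koranyi_gauge p > 0" "koranyi_gauge q > 0"
    and eq: "koranyi_gauge (heis_mult p q) = koranyi_gauge p + koranyi_gauge q"
  shows "snd p = 0 \<and> snd q = 0 \<and> fst p \<noteq> 0 \<and> (\<exists>l>0. fst q = complex_of_real l * fst p)"
proof -
  define x y where "x = cmod (fst p)" and "y = cmod (fst q)"
  define X Y where "X = koranyi_gauge p" and "Y = koranyi_gauge q"
  have xX: "0 \<le> x" "x \<le> X" and yY: "0 \<le> y" "y \<le> Y"
    using norm_fst_le_koranyi_gauge by (auto simp: x_def y_def X_def Y_def)
  have sum_sq: "(X + Y)\<^sup>2 = cmod (complex_gauge (heis_mult p q))"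
    unfolding X_def Y_def by (metis eq koranyi_gauge_sq)
  also have "\<dots> \<le> cmod (complex_gauge p + complex_gauge q) + 2 * x * y"
    unfolding x_def y_def by (rule norm_complex_gauge_heis_mult_le)
  also have "cmod (complex_gauge p + complex_gauge q) \<le> X\<^sup>2 + Y\<^sup>2"
    using norm_triangle_ineq by (simp add: koranyi_gauge_sq X_def Y_def)
  finally have "X * Y \<le> x * y"
    by (simp add: power2_sum)
  then have "x = X" "y = Y"
    using xX yY pos unfolding X_def[symmetric] Y_def[symmetric]
    by (smt (verit, best) mult_left_mono mult_strict_right_mono mult_strict_left_mono mult_right_mono)+
  then have t0: "snd p = 0" "snd q = 0"
    using norm_fst_eq_koranyi_gauge_iff by (auto simp: x_def y_def X_def Y_def)
  then have "complex_gauge p + complex_gauge q = complex_of_real (X\<^sup>2 + Y\<^sup>2)"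
    using \<open>x = X\<close> \<open>y = Y\<close> by (simp add: complex_eq_iff x_def y_def)
  moreover have "cmod (complex_gauge p + complex_gauge q + 2 * fst q * cnj (fst p))
      = (X\<^sup>2 + Y\<^sup>2) + cmod (2 * fst q * cnj (fst p))"
    using sum_sq \<open>x = X\<close> \<open>y = Y\<close>
    by (simp add: complex_gauge_heis_mult norm_mult x_def y_def power2_sum mult_ac)
  ultimately have "2 * fst q * cnj (fst p) = complex_of_real (cmod (2 * fst q * cnj (fst p)))"
    using pos by (intro of_real_add_norm_eq_imp[of "X\<^sup>2 + Y\<^sup>2"]) (simp_all add: X_def add_pos_nonneg)
  then have "fst q * cnj (fst p) = complex_of_real (cmod (fst q) * cmod (fst p))"
    by (simp add: norm_mult)
  moreover have "fst p \<noteq> 0" "cmod (fst q) / cmod (fst p) > 0"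
    using pos \<open>x = X\<close> \<open>y = Y\<close> by (auto simp: x_def y_def X_def Y_def)
  ultimately show ?thesis
    using t0 mult_cnj_eq_norm_imp_positive_multiple by blast
qed

section \<open>The Hermitian form and its isometries\<close>

lemma vec3_eq_iff: "(u::'a^3) = v \<longleftrightarrow> u$1 = v$1 \<and> u$2 = v$2 \<and> u$3 = v$3"
  by (simp add: vec_eq_iff forall_3)

lemma hform_smult_left: "hform (c *s u) v = c * hform u v"
  by (simp add: hform_def distrib_left mult.assoc)

lemma hform_smult_right: "hform u (c *s v) = cnj c * hform u v"
  by (simp add: hform_def distrib_left mult.assoc mult.left_commute)

lemma cnj_hform: "cnj (hform u v) = hform v u"
  by (simp add: hform_def mult.commute add.commute add.left_commute)

lemma hform_self: "hform v v = complex_of_real (2 * Re (v$1 * cnj (v$3)) + (cmod (v$2))\<^sup>2)"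
proof -
  have "hform v v = (v$1 * cnj (v$3) + v$3 * cnj (v$1)) + v$2 * cnj (v$2)"
    by (simp add: hform_def algebra_simps)
  moreover have "v$1 * cnj (v$3) + v$3 * cnj (v$1) = complex_of_real (2 * Re (v$1 * cnj (v$3)))"
    by (simp add: complex_eq_iff)
  ultimately show ?thesis
    by (simp flip: complex_norm_square)
qed

lemma heis_lift_nth [simp]:
  "heis_lift p $ 1 = - complex_of_real ((cmod (fst p))\<^sup>2) + \<i> * complex_of_real (snd p)"
  "heis_lift p $ 2 = complex_of_real (sqrt 2) * fst p"
  "heis_lift p $ 3 = 1"
  by (simp_all add: heis_lift_def)

lemma of_real_sqrt2_sq: "complex_of_real (sqrt 2) * complex_of_real (sqrt 2) = 2"
  by (simp flip: of_real_mult)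

lemma hform_heis_lift:
  "hform (heis_lift p) (heis_lift q) = - cnj (complex_gauge (heis_mult (heis_inv p) q))"
  by (simp add: complex_gauge_def heis_mult_def heis_inv_def hform_def complex_eq_iff cmod_power2)
    (simp add: algebra_simps power2_eq_square)

lemma dK_sq: "(dK p q)\<^sup>2 = cmod (hform (heis_lift p) (heis_lift q))"
  by (simp add: dK_def koranyi_gauge_sq hform_heis_lift)

lemma dK_nonneg: "dK p q \<ge> 0"
  by (simp add: dK_def koranyi_gauge_nonneg)

lemma dK_sym: "dK p q = dK q p"
proof -
  have "(dK p q)\<^sup>2 = (dK q p)\<^sup>2"
    unfolding dK_sq by (metis complex_mod_cnj cnj_hform)
  then show ?thesis
    using dK_nonneg by (metis power2_eq_iff_nonneg)
qed

lemma dK_triangle: "dK x z \<le> dK x y + dK y z"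
  unfolding dK_def using koranyi_gauge_triangle
  by (metis heis_mult_inv_chain)

lemma dK_pos:
  assumes "p \<noteq> q"
  shows "dK p q > 0"
proof -
  have "heis_mult (heis_inv p) q \<noteq> (0, 0)"
  proof
    assume "heis_mult (heis_inv p) q = (0, 0)"
    then have "q = heis_mult p (0, 0)"
      by (metis heis_mult_inv_cancel)
    then show False
      using assms by (simp add: heis_mult_def)
  qed
  then show ?thesis
    using dK_nonneg[of p q] by (simp add: dK_def koranyi_gauge_eq_0_iff less_le)
qed

definition mat3 :: "complex \<Rightarrow> complex \<Rightarrow> complex \<Rightarrow> complex \<Rightarrow> complex \<Rightarrow> complex \<Rightarrow>
    complex \<Rightarrow> complex \<Rightarrow> complex \<Rightarrow> complex^3^3" where
  "mat3 a b c d e f g h k = vector [vector [a, b, c], vector [d, e, f], vector [g, h, k]]"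

lemma mat3_mult_vec:
  "mat3 a b c d e f g h k *v x
     = vector [a * x$1 + b * x$2 + c * x$3, d * x$1 + e * x$2 + f * x$3, g * x$1 + h * x$2 + k * x$3]"
  unfolding vec3_eq_iff matrix_vector_mult_def mat3_def by (simp add: sum_3)

definition e_inf :: "complex^3" where
  "e_inf = vector [1, 0, 0]"

lemma e_inf_nth [simp]: "e_inf $ 1 = 1" "e_inf $ 2 = 0" "e_inf $ 3 = 0"
  by (simp_all add: e_inf_def)

text \<open>The linear maps of \<open>\<complex>\<^sup>2\<^sup>,\<^sup>1\<close> inducing the left translation by \<open>g\<close>, the Koranyi
  inversion \<open>(z, t) \<mapsto> (z / (-|z|\<^sup>2 + i t), -t / ||z|\<^sup>2 - i t|\<^sup>2)\<close> and the rotation \<open>z \<mapsto> u z\<close>.\<close>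
definition heis_translation :: "heis \<Rightarrow> complex^3^3" where
  "heis_translation g =
     mat3 1 (- complex_of_real (sqrt 2) * cnj (fst g)) (- complex_of_real ((cmod (fst g))\<^sup>2) + \<i> * complex_of_real (snd g))
          0 1 (complex_of_real (sqrt 2) * fst g)
          0 0 1"

definition heis_inversion :: "complex^3^3" where
  "heis_inversion = mat3 0 0 1 0 1 0 1 0 0"

definition heis_rotation :: "complex \<Rightarrow> complex^3^3" where
  "heis_rotation u = mat3 1 0 0 0 u 0 0 0 1"

lemma heis_translation_lift: "heis_translation g *v heis_lift p = heis_lift (heis_mult g p)"
proof -
  have "- complex_of_real (sqrt 2) * cnj (fst g) * (complex_of_real (sqrt 2) * fst p)
      = - (complex_of_real (sqrt 2) * complex_of_real (sqrt 2)) * (cnj (fst g) * fst p)"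
    by (simp only: mult_ac minus_mult_left)
  also have "\<dots> = - 2 * (cnj (fst g) * fst p)"
    by (simp only: of_real_sqrt2_sq)
  finally have sqrt2: "- complex_of_real (sqrt 2) * cnj (fst g) * (complex_of_real (sqrt 2) * fst p)
      = - 2 * (cnj (fst g) * fst p)" .
  have "(cmod (fst g + fst p))\<^sup>2 = (cmod (fst g))\<^sup>2 + (cmod (fst p))\<^sup>2 + 2 * Re (cnj (fst g) * fst p)"
    unfolding cmod_power2 by (simp add: power2_eq_square algebra_simps)
  then show ?thesis
    unfolding vec3_eq_iff heis_translation_def mat3_mult_vec heis_mult_def heis_lift_nth sqrt2
    by (simp add: complex_eq_iff algebra_simps)
qed

lemma heis_translation_e_inf: "heis_translation g *v e_inf = e_inf"
  by (simp add: heis_translation_def mat3_mult_vec vec3_eq_iff)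

lemma heis_rotation_e_inf: "heis_rotation u *v e_inf = e_inf"
  by (simp add: heis_rotation_def mat3_mult_vec vec3_eq_iff)

lemma heis_inversion_e_inf: "heis_inversion *v e_inf = heis_lift (0, 0)"
  by (simp add: heis_inversion_def mat3_mult_vec vec3_eq_iff)

lemma heis_inversion_involution: "heis_inversion *v (heis_inversion *v v) = v"
  by (simp add: heis_inversion_def mat3_mult_vec vec3_eq_iff)

lemma heis_rotation_lift: "cmod u = 1 \<Longrightarrow> heis_rotation u *v heis_lift p = heis_lift (u * fst p, snd p)"
  by (simp add: heis_rotation_def mat3_mult_vec vec3_eq_iff norm_mult)

lemma unitary21_mult: "unitary21 A \<Longrightarrow> unitary21 B \<Longrightarrow> unitary21 (A ** B)"
  unfolding unitary21_def by (simp flip: matrix_vector_mul_assoc)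

lemma unitary21_unipotent:
  assumes "b + cnj e = 0" "c + cnj c + e * cnj e = 0"
  shows "unitary21 (mat3 1 b c 0 1 e 0 0 1)"
  unfolding unitary21_def
proof (intro allI)
  fix z w :: "complex^3"
  have "b = - cnj e"
    using assms(1) by (simp add: eq_neg_iff_add_eq_0)
  then have "hform (mat3 1 b c 0 1 e 0 0 1 *v z) (mat3 1 b c 0 1 e 0 0 1 *v w) - hform z w
      = z$3 * cnj (w$3) * (c + cnj c + e * cnj e)"
    unfolding hform_def mat3_mult_vec by (simp add: algebra_simps)
  then show "hform (mat3 1 b c 0 1 e 0 0 1 *v z) (mat3 1 b c 0 1 e 0 0 1 *v w) = hform z w"
    using assms(2) by simp
qed

lemma unitary21_heis_translation: "unitary21 (heis_translation g)"
  unfolding heis_translation_def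
proof (rule unitary21_unipotent)
  have "complex_of_real (sqrt 2) * fst g * cnj (complex_of_real (sqrt 2) * fst g)
      = (complex_of_real (sqrt 2) * complex_of_real (sqrt 2)) * (fst g * cnj (fst g))"
    by (simp add: mult_ac)
  also have "\<dots> = 2 * complex_of_real ((cmod (fst g))\<^sup>2)"
    by (simp only: of_real_sqrt2_sq complex_norm_square)
  finally have "complex_of_real (sqrt 2) * fst g * cnj (complex_of_real (sqrt 2) * fst g)
      = 2 * complex_of_real ((cmod (fst g))\<^sup>2)" .
  then show "- complex_of_real ((cmod (fst g))\<^sup>2) + \<i> * complex_of_real (snd g)
      + cnj (- complex_of_real ((cmod (fst g))\<^sup>2) + \<i> * complex_of_real (snd g))
      + complex_of_real (sqrt 2) * fst g * cnj (complex_of_real (sqrt 2) * fst g) = 0"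
    by simp
qed simp

lemma unitary21_heis_inversion: "unitary21 heis_inversion"
  unfolding unitary21_def hform_def heis_inversion_def mat3_mult_vec by (simp add: algebra_simps)

lemma unitary21_heis_rotation:
  assumes "cmod u = 1"
  shows "unitary21 (heis_rotation u)"
  unfolding unitary21_def
proof (intro allI)
  fix z w :: "complex^3"
  have "u * cnj u = 1"
    using assms complex_norm_square[of u] by simp
  moreover have "hform (heis_rotation u *v z) (heis_rotation u *v w)
      = z$1 * cnj (w$3) + (u * cnj u) * (z$2 * cnj (w$2)) + z$3 * cnj (w$1)"
    by (simp add: hform_def heis_rotation_def mat3_mult_vec mult_ac)
  ultimately show "hform (heis_rotation u *v z) (heis_rotation u *v w) = hform z w"
    by (simp add: hform_def)
qed

lemma hform_nondegenerate:
  assumes "\<And>w. hform z w = 0"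
  shows "z = 0"
proof -
  have "hform z (vector [1, 0, 0]) = 0" "hform z (vector [0, 1, 0]) = 0" "hform z (vector [0, 0, 1]) = 0"
    using assms by auto
  then show ?thesis
    by (simp add: hform_def vec3_eq_iff)
qed

lemma unitary21_inj:
  assumes "unitary21 A" "A *v z = A *v w"
  shows "z = w"
proof -
  have "hform (z - w) v = 0" for v
  proof -
    have "hform (z - w) v = hform (A *v (z - w)) (A *v v)"
      using assms(1) by (simp add: unitary21_def)
    also have "\<dots> = 0"
      using assms(2) by (simp add: matrix_vector_mult_diff_distrib hform_def)
    finally show ?thesis .
  qed
  then show ?thesis
    using hform_nondegenerate[of "z - w"] by simp
qed

lemma heis_lift_in_V0: "heis_lift p \<in> V0"
proof -
  have "heis_lift p \<noteq> 0"
    by (metis heis_lift_nth(3) zero_index zero_neq_one)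
  moreover have "hform (heis_lift p) (heis_lift p) = 0"
    unfolding hform_self by (simp add: norm_mult power2_eq_square of_real_sqrt2_sq)
  ultimately show ?thesis
    by (simp add: V0_def)
qed

definition heis_of_null :: "complex^3 \<Rightarrow> heis" where
  "heis_of_null v = (v$2 / (complex_of_real (sqrt 2) * v$3), Im (v$1 / v$3))"

lemma null_eq_smult_heis_lift:
  assumes "hform v v = 0" "v$3 \<noteq> 0"
  shows "v = v$3 *s heis_lift (heis_of_null v)"
proof -
  define r z where "r = v$1 / v$3" and "z = v$2 / (complex_of_real (sqrt 2) * v$3)"
  have v1: "v$1 = r * v$3"
    using assms(2) by (simp add: r_def)
  have "2 * Re (v$1 * cnj (v$3)) + (cmod (v$2))\<^sup>2 = 0"
    using assms(1) unfolding hform_self by (metis of_real_eq_0_iff)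
  moreover have "Re (v$1 * cnj (v$3)) = Re r * (cmod (v$3))\<^sup>2"
    unfolding v1 by (simp add: mult.assoc flip: complex_norm_square)
  moreover have "(cmod (v$2))\<^sup>2 = 2 * (cmod z)\<^sup>2 * (cmod (v$3))\<^sup>2"
    using assms(2) by (simp add: z_def norm_divide norm_mult power_divide power_mult_distrib)
  ultimately have "2 * (cmod (v$3))\<^sup>2 * (Re r + (cmod z)\<^sup>2) = 0"
    by (simp add: algebra_simps)
  then have "Re r = - (cmod z)\<^sup>2"
    using assms(2) by simp
  then have "r = - complex_of_real ((cmod z)\<^sup>2) + \<i> * complex_of_real (Im r)"
    using assms(2) by (simp add: complex_eq_iff)
  then show ?thesis
    using v1 assms(2)
    unfolding vec3_eq_iff heis_of_null_def r_def[symmetric] z_def[symmetric]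
    by (simp add: z_def mult.commute)
qed

lemma V0_nth1_ne_nth3:
  assumes "v \<in> V0"
  shows "v$1 \<noteq> v$3"
proof
  assume eq: "v$1 = v$3"
  have "hform v v = 0" "v \<noteq> 0"
    using assms by (auto simp: V0_def)
  then have "2 * Re (v$1 * cnj (v$3)) + (cmod (v$2))\<^sup>2 = 0"
    unfolding hform_self by (metis of_real_eq_0_iff)
  then have "2 * (cmod (v$3))\<^sup>2 + (cmod (v$2))\<^sup>2 = 0"
    unfolding eq by (simp flip: complex_norm_square)
  then have "v$3 = 0" "v$2 = 0"
    by (simp_all add: add_nonneg_eq_0_iff)
  then show False
    using eq \<open>v \<noteq> 0\<close> by (simp add: vec3_eq_iff)
qed

definition null_of_bdry :: "complex \<times> complex \<Rightarrow> complex^3" where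
  "null_of_bdry y = vector [fst y + 1, complex_of_real (sqrt 2) * snd y, fst y - 1]"

lemma null_of_bdry_bdry:
  assumes "v \<in> V0"
  shows "null_of_bdry (bdry v) = (2 / (v$1 - v$3)) *s v"
proof -
  have "v$1 - v$3 \<noteq> 0"
    using V0_nth1_ne_nth3[OF assms] by simp
  moreover have "complex_of_real (sqrt 2) * (complex_of_real (sqrt 2) * v$2 / (v$1 - v$3))
      = 2 * v$2 / (v$1 - v$3)"
    by (simp add: mult.assoc[symmetric] of_real_sqrt2_sq)
  ultimately show ?thesis
    unfolding null_of_bdry_def bdry_def vec3_eq_iff by (simp add: field_simps)
qed

lemma bdry_smult:
  assumes "c \<noteq> 0"
  shows "bdry (c *s v) = bdry v"
  using assms
  by (simp add: bdry_def mult.left_commute flip: distrib_left right_diff_distrib)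

lemma bdry_eq_imp_smult:
  assumes "u \<in> V0" "v \<in> V0" "bdry u = bdry v"
  shows "\<exists>c. c \<noteq> 0 \<and> u = c *s v"
proof -
  have du: "u$1 - u$3 \<noteq> 0" and dv: "v$1 - v$3 \<noteq> 0"
    using V0_nth1_ne_nth3 assms by auto
  have one: "((u$1 - u$3) / 2) * (2 / (u$1 - u$3)) = 1"
    using du by simp
  have "u = (((u$1 - u$3) / 2) * (2 / (u$1 - u$3))) *s u"
    by (simp only: one vector_smult_lid)
  also have "\<dots> = ((u$1 - u$3) / 2) *s ((2 / (v$1 - v$3)) *s v)"
    using null_of_bdry_bdry assms by (metis vector_smult_assoc)
  also have "\<dots> = (((u$1 - u$3) / 2) * (2 / (v$1 - v$3))) *s v"
    by (rule vector_smult_assoc)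
  also have "((u$1 - u$3) / 2) * (2 / (v$1 - v$3)) = (u$1 - u$3) / (v$1 - v$3)"
    using dv by (simp add: field_simps)
  finally have "u = ((u$1 - u$3) / (v$1 - v$3)) *s v" .
  moreover have "(u$1 - u$3) / (v$1 - v$3) \<noteq> 0"
    using du dv by simp
  ultimately show ?thesis
    by blast
qed

lemma unitary21_V0:
  assumes "unitary21 A" "v \<in> V0"
  shows "A *v v \<in> V0"
  using assms unitary21_inj[OF assms(1), of v 0] by (auto simp: V0_def unitary21_def)

lemma heis_lift_eq_smult_imp_eq:
  assumes "heis_lift p = c *s heis_lift q"
  shows "p = q"
proof -
  have "c = 1"
    using assms by (metis heis_lift_nth(3) vector_smult_component mult_1_right)
  then have "heis_lift p $ 1 = heis_lift q $ 1" "heis_lift p $ 2 = heis_lift q $ 2"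
    using assms by simp_all
  then show ?thesis
    by (simp add: prod_eq_iff complex_eq_iff)
qed

section \<open>\<open>\<real>\<close>-circles\<close>

definition Rcircle_of :: "complex^3^3 \<Rightarrow> (complex \<times> complex) set" where
  "Rcircle_of A = (\<lambda>x. bdry (A *v x)) ` (V0 \<inter> real_vecs)"

lemma real_vecs_iff: "x \<in> real_vecs \<longleftrightarrow> Im (x$1) = 0 \<and> Im (x$2) = 0 \<and> Im (x$3) = 0"
proof
  assume "Im (x$1) = 0 \<and> Im (x$2) = 0 \<and> Im (x$3) = 0"
  then have "x = (\<chi> i. complex_of_real ((\<chi> i. Re (x$i) :: real^3) $ i))"
    by (simp add: vec3_eq_iff complex_eq_iff)
  then show "x \<in> real_vecs"
    unfolding real_vecs_def by blast
qed (auto simp: real_vecs_def)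

definition real_lift :: "real \<Rightarrow> complex^3" where
  "real_lift s = heis_lift (complex_of_real s, 0)"

lemma real_lift_nth [simp]:
  "real_lift s $ 1 = - complex_of_real (s\<^sup>2)"
  "real_lift s $ 2 = complex_of_real (sqrt 2 * s)"
  "real_lift s $ 3 = 1"
  by (simp_all add: real_lift_def)

lemma real_lift_in_real_null: "real_lift s \<in> V0 \<inter> real_vecs"
  using heis_lift_in_V0 by (simp add: real_lift_def real_vecs_iff power2_eq_square)

lemma e_inf_in_real_null: "e_inf \<in> V0 \<inter> real_vecs"
proof -
  have "e_inf \<noteq> 0"
    by (metis e_inf_nth(1) zero_index zero_neq_one)
  then show ?thesis
    by (simp add: V0_def hform_def real_vecs_iff)
qed

lemma real_null_cases:
  assumes "x \<in> V0 \<inter> real_vecs"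
  obtains c where "c \<noteq> 0" "x = c *s e_inf"
    | c s where "c \<noteq> 0" "x = c *s real_lift s"
proof (cases "x$3 = 0")
  case True
  have "hform x x = 0" "x \<noteq> 0"
    using assms by (auto simp: V0_def)
  then have "2 * Re (x$1 * cnj (x$3)) + (cmod (x$2))\<^sup>2 = 0"
    unfolding hform_self by (metis of_real_eq_0_iff)
  then have "x$2 = 0"
    using True by simp
  then have "x = x$1 *s e_inf" "x$1 \<noteq> 0"
    using True \<open>x \<noteq> 0\<close> by (auto simp: vec3_eq_iff)
  then show ?thesis
    using that(1) by blast
next
  case False
  have "x = x$3 *s heis_lift (heis_of_null x)"
    using assms False by (intro null_eq_smult_heis_lift) (auto simp: V0_def)
  moreover have "heis_of_null x = (complex_of_real (Re (x$2) / (sqrt 2 * Re (x$3))), 0)"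
    using assms False unfolding heis_of_null_def
    by (simp add: real_vecs_iff complex_eq_iff Im_divide Re_divide)
  ultimately have "x = x$3 *s real_lift (Re (x$2) / (sqrt 2 * Re (x$3)))"
    by (simp add: real_lift_def)
  then show ?thesis
    by (rule that(2)[OF False])
qed

lemma hform_e_inf_real_lift [simp]: "hform e_inf (real_lift s) = 1"
  and hform_real_lift_e_inf [simp]: "hform (real_lift s) e_inf = 1"
  by (simp_all add: hform_def)

lemma norm_hform_real_lift: "cmod (hform (real_lift s) (real_lift t)) = (s - t)\<^sup>2"
proof -
  have h: "hform (real_lift s) (real_lift t) = - complex_of_real ((s - t)\<^sup>2)"
    by (simp add: hform_def power2_eq_square algebra_simps flip: of_real_mult)
  show ?thesis
    unfolding h norm_minus_cancel norm_of_real by simp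
qed

lemma dK_eq_of_smult_lifts:
  assumes "unitary21 C" "heis_lift p = \<alpha> *s (C *v x)" "heis_lift q = \<beta> *s (C *v y)"
  shows "dK p q = sqrt (cmod \<alpha> * cmod \<beta> * cmod (hform x y))"
proof -
  have "(dK p q)\<^sup>2 = cmod (\<alpha> * cnj \<beta> * hform x y)"
    unfolding dK_sq assms(2,3) hform_smult_left hform_smult_right
    using assms(1) by (simp add: unitary21_def mult.assoc mult.left_commute)
  also have "\<dots> = cmod \<alpha> * cmod \<beta> * cmod (hform x y)"
    by (simp add: norm_mult)
  finally show ?thesis
    using dK_nonneg by (metis real_sqrt_unique)
qed

lemma bdry_unitary21_eq_imp_smult:
  assumes "unitary21 C" "u \<in> V0" "v \<in> V0" "bdry (C *v u) = bdry (C *v v)"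
  shows "\<exists>c. c \<noteq> 0 \<and> u = c *s v"
proof -
  obtain c where "c \<noteq> 0" "C *v u = C *v (c *s v)"
    using bdry_eq_imp_smult[OF unitary21_V0[OF assms(1,2)] unitary21_V0[OF assms(1,3)] assms(4)]
    by (auto simp: vector_scalar_commute)
  then show ?thesis
    using unitary21_inj[OF assms(1)] by blast
qed

lemma real_lift_ne_smult_e_inf: "real_lift s \<noteq> c *s e_inf"
  by (metis real_lift_nth(3) e_inf_nth(3) mult_zero_right vector_smult_component zero_neq_one)

lemma heis_lift_on_Rcircle_of:
  assumes "unitary21 C" "heis_bd p \<in> Rcircle_of C"
  obtains \<mu> where "\<mu> \<noteq> 0" "heis_lift p = \<mu> *s (C *v e_inf)"
    | \<mu> s where "\<mu> \<noteq> 0" "heis_lift p = \<mu> *s (C *v real_lift s)"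
proof -
  obtain x where x: "x \<in> V0 \<inter> real_vecs" "heis_bd p = bdry (C *v x)"
    using assms(2) by (auto simp: Rcircle_of_def)
  then obtain \<mu> where \<mu>: "\<mu> \<noteq> 0" "heis_lift p = \<mu> *s (C *v x)"
    using bdry_eq_imp_smult[OF heis_lift_in_V0 unitary21_V0[OF assms(1)], of x p]
    by (auto simp: heis_bd_def)
  from x(1) show ?thesis
  proof (cases rule: real_null_cases)
    case (1 c)
    then show ?thesis
      using that(1)[of "\<mu> * c"] \<mu> by (simp add: vector_scalar_commute)
  next
    case (2 c s)
    then show ?thesis
      using that(2)[of "\<mu> * c"] \<mu> by (simp add: vector_scalar_commute)
  qed
qed

lemma bdry_unitary21_real_lift_in_Rcircle_of: "bdry (C *v real_lift s) \<in> Rcircle_of C"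
  unfolding Rcircle_of_def using real_lift_in_real_null by blast

lemma bdry_unitary21_e_inf_in_Rcircle_of: "bdry (C *v e_inf) \<in> Rcircle_of C"
  unfolding Rcircle_of_def using e_inf_in_real_null by blast

lemma Rcircle_of_cases:
  assumes "y \<in> Rcircle_of C" "y \<noteq> bdry (C *v e_inf)"
  shows "\<exists>s. y = bdry (C *v real_lift s)"
proof -
  obtain x where x: "x \<in> V0 \<inter> real_vecs" "y = bdry (C *v x)"
    using assms(1) by (auto simp: Rcircle_of_def)
  from x(1) show ?thesis
  proof (cases rule: real_null_cases)
    case (1 c)
    then show ?thesis
      using x(2) assms(2) by (simp add: vector_scalar_commute bdry_smult)
  next
    case (2 c s)
    then show ?thesis
      using x(2) by (auto simp: vector_scalar_commute bdry_smult)
  qed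
qed

lemma bdry_real_lift_ne_e_inf:
  assumes "unitary21 C"
  shows "bdry (C *v real_lift s) \<noteq> bdry (C *v e_inf)"
  using bdry_unitary21_eq_imp_smult[OF assms] real_lift_in_real_null e_inf_in_real_null
    real_lift_ne_smult_e_inf
  by blast

lemma bdry_real_lift_eq_iff:
  assumes "unitary21 C"
  shows "bdry (C *v real_lift s) = bdry (C *v real_lift t) \<longleftrightarrow> s = t"
  using bdry_unitary21_eq_imp_smult[OF assms] real_lift_in_real_null heis_lift_eq_smult_imp_eq
  by (fastforce simp: real_lift_def)

lemma hform_null_of_bdry:
  "hform (null_of_bdry y) V
     = (fst y + 1) * cnj (V$3) + complex_of_real (sqrt 2) * snd y * cnj (V$2) + (fst y - 1) * cnj (V$1)"
  by (simp add: hform_def null_of_bdry_def)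

definition Rcircle_coord :: "complex^3^3 \<Rightarrow> complex \<times> complex \<Rightarrow> real" where
  "Rcircle_coord C y = Re (hform (null_of_bdry y) (C *v vector [0, complex_of_real (1 / sqrt 2), 0])
                          / hform (null_of_bdry y) (C *v e_inf))"

lemma Rcircle_coord_real_lift:
  assumes "unitary21 C"
  shows "hform (null_of_bdry (bdry (C *v real_lift s))) (C *v e_inf) \<noteq> 0"
    and "Rcircle_coord C (bdry (C *v real_lift s)) = s"
proof -
  define v where "v = C *v real_lift s"
  have "v \<in> V0"
    unfolding v_def using unitary21_V0[OF assms] real_lift_in_real_null by blast
  define k where "k = 2 / (v$1 - v$3)"
  have "k \<noteq> 0"
    using V0_nth1_ne_nth3[OF \<open>v \<in> V0\<close>] by (simp add: k_def)
  have null: "null_of_bdry (bdry v) = k *s v"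
    using null_of_bdry_bdry[OF \<open>v \<in> V0\<close>] by (simp add: k_def)
  have "hform (null_of_bdry (bdry v)) (C *v e_inf) = k"
    using assms unfolding null hform_smult_left by (simp add: v_def unitary21_def)
  moreover have "hform (null_of_bdry (bdry v)) (C *v vector [0, complex_of_real (1 / sqrt 2), 0])
      = k * complex_of_real s"
    using assms unfolding null hform_smult_left by (simp add: v_def unitary21_def hform_def)
  ultimately show "hform (null_of_bdry (bdry (C *v real_lift s))) (C *v e_inf) \<noteq> 0"
    and "Rcircle_coord C (bdry (C *v real_lift s)) = s"
    using \<open>k \<noteq> 0\<close> by (simp_all add: Rcircle_coord_def v_def)
qed

lemma continuous_on_Rcircle_coord:
  assumes "unitary21 C"
  shows "continuous_on (Rcircle_of C - {bdry (C *v e_inf)}) (Rcircle_coord C)"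
proof -
  have "hform (null_of_bdry y) (C *v e_inf) \<noteq> 0" if "y \<in> Rcircle_of C - {bdry (C *v e_inf)}" for y
    using Rcircle_of_cases Rcircle_coord_real_lift(1)[OF assms] that by blast
  then show ?thesis
    unfolding Rcircle_coord_def hform_null_of_bdry by (intro continuous_intros) auto
qed

lemma continuous_on_bdry_real_lift:
  assumes "unitary21 C"
  shows "continuous_on UNIV (\<lambda>s. bdry (C *v real_lift s))"
proof -
  have "(C *v real_lift s) $ 1 - (C *v real_lift s) $ 3 \<noteq> 0" for s
    using V0_nth1_ne_nth3 unitary21_V0[OF assms] real_lift_in_real_null by fastforce
  then show ?thesis
    unfolding bdry_def matrix_vector_mult_def
    by (simp add: sum_3) (intro continuous_intros; simp add: sum_3)
qed

locale Rcircle_frame =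
  fixes C :: "complex^3^3" and a b c d :: heis and \<alpha> \<beta> \<gamma> \<delta> :: complex and sb sc sd :: real
  assumes unitary: "unitary21 C"
    and lift_a: "heis_lift a = \<alpha> *s (C *v e_inf)"
    and lift_b: "heis_lift b = \<beta> *s (C *v real_lift sb)"
    and lift_c: "heis_lift c = \<gamma> *s (C *v real_lift sc)"
    and lift_d: "heis_lift d = \<delta> *s (C *v real_lift sd)"
    and nonzero: "\<alpha> \<noteq> 0" "\<beta> \<noteq> 0" "\<gamma> \<noteq> 0" "\<delta> \<noteq> 0"
    and distinct: "sb \<noteq> sc" "sb \<noteq> sd" "sc \<noteq> sd"
begin

lemma heis_bd_a: "heis_bd a = bdry (C *v e_inf)"
  and heis_bd_b: "heis_bd b = bdry (C *v real_lift sb)"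
  and heis_bd_c: "heis_bd c = bdry (C *v real_lift sc)"
  and heis_bd_d: "heis_bd d = bdry (C *v real_lift sd)"
  using lift_a lift_b lift_c lift_d nonzero by (simp_all add: heis_bd_def bdry_smult)

lemma on_Rcircle_of:
  "heis_bd a \<in> Rcircle_of C" "heis_bd b \<in> Rcircle_of C"
  "heis_bd c \<in> Rcircle_of C" "heis_bd d \<in> Rcircle_of C"
  unfolding heis_bd_a heis_bd_b heis_bd_c heis_bd_d
  by (simp_all add: bdry_unitary21_e_inf_in_Rcircle_of bdry_unitary21_real_lift_in_Rcircle_of)

text \<open>In the frame, \<open>dK\<close> between \<open>a\<close> and another point is a product of scaling factors,
  so the three Ptolemy products share the factor \<open>\<surd>|\<alpha>\<beta>\<gamma>\<delta>|\<close>.\<close>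
lemma ptolemy_eq_iff_between:
  "dK b c * dK a d = dK b d * dK a c + dK a b * dK c d \<longleftrightarrow> sd \<in> open_segment sb sc"
proof -
  define M where "M = sqrt (cmod \<alpha> * cmod \<beta> * cmod \<gamma> * cmod \<delta>)"
  have "M > 0"
    using nonzero by (simp add: M_def)
  have dK_real: "dK p q = sqrt (cmod \<mu> * cmod \<nu>) * \<bar>s - t\<bar>"
    if "heis_lift p = \<mu> *s (C *v real_lift s)" "heis_lift q = \<nu> *s (C *v real_lift t)" for p q \<mu> \<nu> s t
    using dK_eq_of_smult_lifts[OF unitary that] by (simp add: norm_hform_real_lift real_sqrt_mult)
  have dK_a: "dK a q = sqrt (cmod \<alpha> * cmod \<nu>)"
    if "heis_lift q = \<nu> *s (C *v real_lift t)" for q \<nu> t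
    using dK_eq_of_smult_lifts[OF unitary lift_a that] by simp
  have "dK b c * dK a d = M * \<bar>sb - sc\<bar>"
    "dK b d * dK a c = M * \<bar>sb - sd\<bar>"
    "dK a b * dK c d = M * \<bar>sc - sd\<bar>"
    unfolding dK_real[OF lift_b lift_c] dK_real[OF lift_b lift_d] dK_real[OF lift_c lift_d]
      dK_a[OF lift_b] dK_a[OF lift_c] dK_a[OF lift_d] M_def
    by (simp_all add: real_sqrt_mult mult_ac)
  then have "dK b c * dK a d = dK b d * dK a c + dK a b * dK c d
      \<longleftrightarrow> \<bar>sb - sc\<bar> = \<bar>sb - sd\<bar> + \<bar>sc - sd\<bar>"
    using \<open>M > 0\<close> by (simp flip: distrib_left)
  also have "\<dots> \<longleftrightarrow> sd \<in> open_segment sb sc"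
    using distinct by (auto simp: open_segment_eq_real_ivl)
  finally show ?thesis .
qed

lemma bdry_real_lift_in_punctured_iff:
  "bdry (C *v real_lift s) \<in> Rcircle_of C - {heis_bd a, heis_bd d} \<longleftrightarrow> s \<noteq> sd"
  by (simp add: heis_bd_a heis_bd_d bdry_real_lift_ne_e_inf[OF unitary]
      bdry_real_lift_eq_iff[OF unitary] bdry_unitary21_real_lift_in_Rcircle_of)

text \<open>The parameters of the closed segment from \<open>sb\<close> to \<open>sc\<close> trace a connected arc from \<open>b\<close>
  to \<open>c\<close>, which avoids \<open>d\<close> unless \<open>sd\<close> lies on it.\<close>
lemma connected_component_if_not_between:
  assumes "sd \<notin> open_segment sb sc"
  shows "heis_bd c \<in> connected_component_set (Rcircle_of C - {heis_bd a, heis_bd d}) (heis_bd b)"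
proof -
  have "sd \<notin> closed_segment sb sc"
    using assms distinct by (auto simp: open_segment_def)
  define T where "T = (\<lambda>s. bdry (C *v real_lift s)) ` closed_segment sb sc"
  have "connected T"
    unfolding T_def
    by (intro connected_continuous_image connected_segment
        continuous_on_subset[OF continuous_on_bdry_real_lift[OF unitary]]) simp
  moreover have "T \<subseteq> Rcircle_of C - {heis_bd a, heis_bd d}"
    unfolding T_def image_subset_iff bdry_real_lift_in_punctured_iff
    using \<open>sd \<notin> closed_segment sb sc\<close> by blast
  moreover have "heis_bd b \<in> T" "heis_bd c \<in> T"
    by (auto simp: T_def heis_bd_b heis_bd_c)
  ultimately show ?thesis
    using connected_component_maximal by blast
qed

text \<open>On the component of \<open>b\<close> the continuous coordinate takes the values \<open>sb\<close> and \<open>sc\<close>, hence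
  also \<open>sd\<close>, but the only point with coordinate \<open>sd\<close> is \<open>d\<close> itself.\<close>
lemma not_connected_component_if_between:
  assumes "sd \<in> open_segment sb sc"
  shows "heis_bd c \<notin> connected_component_set (Rcircle_of C - {heis_bd a, heis_bd d}) (heis_bd b)"
proof
  define S where "S = Rcircle_of C - {heis_bd a, heis_bd d}"
  define K where "K = connected_component_set S (heis_bd b)"
  assume "heis_bd c \<in> connected_component_set (Rcircle_of C - {heis_bd a, heis_bd d}) (heis_bd b)"
  then have "heis_bd c \<in> K"
    by (simp add: K_def S_def)
  then have "heis_bd b \<in> K"
    unfolding K_def using connected_component_in connected_component_refl_eq by fastforce
  have "K \<subseteq> S"
    unfolding K_def by (rule connected_component_subset)
  then have "K \<subseteq> Rcircle_of C - {bdry (C *v e_inf)}"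
    by (auto simp: S_def heis_bd_a)
  then have "continuous_on K (Rcircle_coord C)"
    by (rule continuous_on_subset[OF continuous_on_Rcircle_coord[OF unitary]])
  then have "connected (Rcircle_coord C ` K)"
    by (rule connected_continuous_image) (simp add: K_def)
  moreover have "Rcircle_coord C (heis_bd b) = sb" "Rcircle_coord C (heis_bd c) = sc"
    by (simp_all add: heis_bd_b heis_bd_c Rcircle_coord_real_lift(2)[OF unitary])
  ultimately have "closed_segment sb sc \<subseteq> Rcircle_coord C ` K"
    using \<open>heis_bd b \<in> K\<close> \<open>heis_bd c \<in> K\<close>
    by (metis connected_convex_1 convex_contains_segment image_eqI)
  then obtain y where "y \<in> K" "Rcircle_coord C y = sd"
    using assms segment_open_subset_closed by blast
  moreover have "y \<in> S"
    using \<open>y \<in> K\<close> \<open>K \<subseteq> S\<close> by blast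
  then obtain s where "y = bdry (C *v real_lift s)"
    using Rcircle_of_cases[of y C] by (auto simp: S_def heis_bd_a)
  ultimately show False
    using \<open>y \<in> S\<close> bdry_real_lift_in_punctured_iff[of s] Rcircle_coord_real_lift(2)[OF unitary, of s]
    by (simp add: S_def)
qed

lemma separates_iff_between: "separates (Rcircle_of C) a d b c \<longleftrightarrow> sd \<in> open_segment sb sc"
proof -
  have "heis_bd b \<in> Rcircle_of C - {heis_bd a, heis_bd d}"
    "heis_bd c \<in> Rcircle_of C - {heis_bd a, heis_bd d}"
    unfolding heis_bd_b heis_bd_c bdry_real_lift_in_punctured_iff using distinct by simp_all
  then show ?thesis
    using connected_component_if_not_between not_connected_component_if_between
    unfolding separates_def by blast
qed

lemma on_Rcircle_sep_if_between:
  assumes "sd \<in> open_segment sb sc"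
  shows "on_Rcircle_sep a d b c"
proof -
  have "is_Rcircle (Rcircle_of C)"
    unfolding is_Rcircle_def Rcircle_of_def using unitary by blast
  then show ?thesis
    unfolding on_Rcircle_sep_def using on_Rcircle_of separates_iff_between assms by blast
qed

end

lemma heis_translation_real_vecs:
  "x \<in> real_vecs \<Longrightarrow> heis_translation (complex_of_real s, 0) *v x \<in> real_vecs"
  by (simp add: real_vecs_iff heis_translation_def mat3_mult_vec)

lemma heis_inversion_real_vecs: "x \<in> real_vecs \<Longrightarrow> heis_inversion *v x \<in> real_vecs"
  by (simp add: real_vecs_iff heis_inversion_def mat3_mult_vec)

lemma heis_translation_inv: "heis_translation g *v (heis_translation (heis_inv g) *v x) = x"
  using of_real_sqrt2_sq complex_norm_square[of "fst g"]
  by (simp add: heis_translation_def heis_inv_def mat3_mult_vec vec3_eq_iff algebra_simps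
      power2_eq_square)

lemma Rcircle_of_mult_eq:
  assumes "\<And>x. x \<in> V0 \<inter> real_vecs \<Longrightarrow> P *v x \<in> V0 \<inter> real_vecs"
    and "\<And>x. x \<in> V0 \<inter> real_vecs \<Longrightarrow> Q *v x \<in> V0 \<inter> real_vecs"
    and "\<And>x. P *v (Q *v x) = x"
  shows "Rcircle_of (A ** P) = Rcircle_of A"
proof -
  have "Rcircle_of (A ** P) = (\<lambda>x. bdry (A *v x)) ` ((*v) P ` (V0 \<inter> real_vecs))"
    unfolding Rcircle_of_def by (simp add: image_image flip: matrix_vector_mul_assoc)
  moreover have "(*v) P ` (V0 \<inter> real_vecs) = V0 \<inter> real_vecs"
    using assms by (auto intro: image_eqI[where x = "Q *v x" for x])
  ultimately show ?thesis
    by (simp add: Rcircle_of_def)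
qed

text \<open>A real point \<open>real_lift s\<close> is the image of \<open>e_inf\<close> under the inversion followed by the real
  translation by \<open>s\<close>, and both preserve real null vectors.\<close>
lemma Rcircle_of_point_at_e_inf:
  assumes "unitary21 A" "heis_bd a \<in> Rcircle_of A"
  obtains C \<alpha> where "unitary21 C" "\<alpha> \<noteq> 0" "heis_lift a = \<alpha> *s (C *v e_inf)"
    "Rcircle_of C = Rcircle_of A"
  using assms
proof (cases rule: heis_lift_on_Rcircle_of)
  case (1 \<mu>)
  then show ?thesis
    using that assms(1) by blast
next
  case (2 \<mu> s)
  define P where "P = heis_translation (complex_of_real s, 0) ** heis_inversion"
  define Q where "Q = heis_inversion ** heis_translation (heis_inv (complex_of_real s, 0))"
  have "unitary21 P" "unitary21 Q"
    unfolding P_def Q_def by (intro unitary21_mult unitary21_heis_translation unitary21_heis_inversion)+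
  have "P *v e_inf = real_lift s"
    by (simp add: P_def real_lift_def heis_inversion_e_inf heis_translation_lift heis_mult_def
        flip: matrix_vector_mul_assoc)
  moreover have "Rcircle_of (A ** P) = Rcircle_of A"
  proof (rule Rcircle_of_mult_eq)
    show "P *v x \<in> V0 \<inter> real_vecs" if "x \<in> V0 \<inter> real_vecs" for x
      using that unitary21_V0[OF \<open>unitary21 P\<close>] unfolding P_def
      by (auto simp: heis_translation_real_vecs heis_inversion_real_vecs
          simp flip: matrix_vector_mul_assoc)
    show "Q *v x \<in> V0 \<inter> real_vecs" if "x \<in> V0 \<inter> real_vecs" for x
      using that unitary21_V0[OF \<open>unitary21 Q\<close>] heis_translation_real_vecs[of _ "- s"] unfolding Q_def
      by (auto simp: heis_inv_def heis_inversion_real_vecs simp flip: matrix_vector_mul_assoc)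
    show "P *v (Q *v x) = x" for x
      by (simp add: P_def Q_def heis_inversion_involution heis_translation_inv
          flip: matrix_vector_mul_assoc)
  qed
  moreover from \<open>P *v e_inf = real_lift s\<close> have "heis_lift a = \<mu> *s ((A ** P) *v e_inf)"
    using 2 by (simp flip: matrix_vector_mul_assoc)
  ultimately show ?thesis
    using that unitary21_mult[OF assms(1) \<open>unitary21 P\<close>] 2(1) by blast
qed

lemma heis_lift_smult_same_imp_eq:
  assumes "heis_lift p = \<mu> *s v" "heis_lift q = \<nu> *s v" "\<nu> \<noteq> 0"
  shows "p = q"
proof -
  have "heis_lift p = (\<mu> / \<nu>) *s heis_lift q"
    using assms by simp
  then show ?thesis
    by (rule heis_lift_eq_smult_imp_eq)
qed

lemma Rcircle_frame_exists:
  assumes "unitary21 A" "distinct [a, b, c, d]"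
    and "heis_bd a \<in> Rcircle_of A" "heis_bd b \<in> Rcircle_of A"
    "heis_bd c \<in> Rcircle_of A" "heis_bd d \<in> Rcircle_of A"
  obtains C \<alpha> \<beta> \<gamma> \<delta> sb sc sd
  where "Rcircle_frame C a b c d \<alpha> \<beta> \<gamma> \<delta> sb sc sd" "Rcircle_of C = Rcircle_of A"
proof -
  obtain C \<alpha> where C: "unitary21 C" "\<alpha> \<noteq> 0" "heis_lift a = \<alpha> *s (C *v e_inf)"
    "Rcircle_of C = Rcircle_of A"
    using Rcircle_of_point_at_e_inf[OF assms(1,3)] .
  have real_param: "\<exists>\<nu> s. \<nu> \<noteq> 0 \<and> heis_lift p = \<nu> *s (C *v real_lift s)"
    if "heis_bd p \<in> Rcircle_of C" "p \<noteq> a" for p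
    using C(1) that(1)
  proof (cases rule: heis_lift_on_Rcircle_of)
    case (1 \<mu>)
    then show ?thesis
      using heis_lift_smult_same_imp_eq[OF _ C(3,2)] that(2) by blast
  qed blast
  obtain \<beta> sb where b: "\<beta> \<noteq> 0" "heis_lift b = \<beta> *s (C *v real_lift sb)"
    using real_param[of b] assms C(4) by auto
  obtain \<gamma> sc where c: "\<gamma> \<noteq> 0" "heis_lift c = \<gamma> *s (C *v real_lift sc)"
    using real_param[of c] assms C(4) by auto
  obtain \<delta> sd where d: "\<delta> \<noteq> 0" "heis_lift d = \<delta> *s (C *v real_lift sd)"
    using real_param[of d] assms C(4) by auto
  have same_param: "p = q" if "s = t" "heis_lift p = \<mu> *s (C *v real_lift s)"
    "heis_lift q = \<nu> *s (C *v real_lift t)" "\<nu> \<noteq> 0" for p q \<mu> \<nu> s t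
    using heis_lift_smult_same_imp_eq that by simp
  have "sb \<noteq> sc" "sb \<noteq> sd" "sc \<noteq> sd"
    using same_param[OF _ b(2) c(2) c(1)] same_param[OF _ b(2) d(2) d(1)]
      same_param[OF _ c(2) d(2) d(1)] assms(2)
    by auto
  then have "Rcircle_frame C a b c d \<alpha> \<beta> \<gamma> \<delta> sb sc sd"
    using C b c d by unfold_locales auto
  then show ?thesis
    using that C(4) by blast
qed

lemma ptolemy_eq_if_on_Rcircle_sep:
  assumes "distinct [a, b, c, d]" "on_Rcircle_sep a d b c"
  shows "dK b c * dK a d = dK b d * dK a c + dK a b * dK c d"
proof -
  obtain A where A: "unitary21 A" "heis_bd a \<in> Rcircle_of A" "heis_bd b \<in> Rcircle_of A"
    "heis_bd c \<in> Rcircle_of A" "heis_bd d \<in> Rcircle_of A" "separates (Rcircle_of A) a d b c"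
    using assms(2) unfolding on_Rcircle_sep_def is_Rcircle_def Rcircle_of_def[symmetric] by blast
  obtain C \<alpha> \<beta> \<gamma> \<delta> sb sc sd where
    frame: "Rcircle_frame C a b c d \<alpha> \<beta> \<gamma> \<delta> sb sc sd" and "Rcircle_of C = Rcircle_of A"
    using Rcircle_frame_exists[OF A(1) assms(1) A(2-5)] .
  then show ?thesis
    using A(6) Rcircle_frame.separates_iff_between[OF frame]
      Rcircle_frame.ptolemy_eq_iff_between[OF frame]
    by simp
qed

section \<open>Koranyi inversion and the Ptolemaic inequality\<close>

text \<open>\<open>q\<close> is obtained from \<open>p\<close> by translating \<open>a\<close> to the origin and applying the Koranyi
  inversion, which sends \<open>a\<close> to \<open>\<infinity>\<close>.\<close>
lemma heis_lift_eq_inversion: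
  assumes "p \<noteq> a"
  obtains q \<kappa> where "\<kappa> \<noteq> 0" "cmod \<kappa> = (dK a p)\<^sup>2"
    "heis_lift p = \<kappa> *s ((heis_translation a ** heis_inversion) *v heis_lift q)"
proof -
  define w where "w = heis_inversion *v heis_lift (heis_mult (heis_inv a) p)"
  have "cmod (w$3) = (dK a p)\<^sup>2"
    by (simp add: w_def heis_inversion_def mat3_mult_vec dK_def koranyi_gauge_sq complex_gauge_def
        norm_minus_commute)
  then have "w$3 \<noteq> 0"
    using dK_pos[OF assms[symmetric]] by auto
  moreover have "hform w w = 0"
    using unitary21_V0[OF unitary21_heis_inversion heis_lift_in_V0] by (simp add: w_def V0_def)
  ultimately have "w = w$3 *s heis_lift (heis_of_null w)"
    by (rule null_eq_smult_heis_lift[rotated])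
  then have "heis_lift p = w$3 *s ((heis_translation a ** heis_inversion) *v heis_lift (heis_of_null w))"
    by (metis w_def heis_inversion_involution heis_translation_lift heis_mult_inv_cancel
        vector_scalar_commute matrix_vector_mul_assoc)
  with \<open>w$3 \<noteq> 0\<close> \<open>cmod (w$3) = (dK a p)\<^sup>2\<close> show ?thesis
    using that by blast
qed

lemma dK_inversion:
  assumes "heis_lift p = \<kappa> *s ((heis_translation a ** heis_inversion) *v heis_lift q)"
    "heis_lift p' = \<kappa>' *s ((heis_translation a ** heis_inversion) *v heis_lift q')"
    "cmod \<kappa> = (dK a p)\<^sup>2" "cmod \<kappa>' = (dK a p')\<^sup>2"
  shows "dK p p' = dK a p * dK a p' * dK q q'"
proof -
  have "unitary21 (heis_translation a ** heis_inversion)"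
    by (intro unitary21_mult unitary21_heis_translation unitary21_heis_inversion)
  then have "dK p p' = sqrt ((dK a p)\<^sup>2 * (dK a p')\<^sup>2 * (dK q q')\<^sup>2)"
    using dK_eq_of_smult_lifts assms by (metis dK_sq)
  also have "\<dots> = dK a p * dK a p' * dK q q'"
    by (simp add: real_sqrt_mult dK_nonneg)
  finally show ?thesis .
qed

lemma dK_triangle_eq_imp_horizontal_ray:
  assumes "x \<noteq> y" "y \<noteq> z" "dK x z = dK x y + dK y z"
  obtains u r s where "cmod u = 1" "0 < r" "r < s"
    "y = heis_mult x (u * complex_of_real r, 0)" "z = heis_mult x (u * complex_of_real s, 0)"
proof -
  define P Q where "P = heis_mult (heis_inv x) y" and "Q = heis_mult (heis_inv y) z"
  have "koranyi_gauge P > 0" "koranyi_gauge Q > 0"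
    using dK_pos assms(1,2) by (simp_all add: P_def Q_def dK_def)
  moreover have "koranyi_gauge (heis_mult P Q) = koranyi_gauge P + koranyi_gauge Q"
    using assms(3) by (simp add: P_def Q_def dK_def heis_mult_inv_chain)
  ultimately obtain l where PQ: "snd P = 0" "snd Q = 0" "fst P \<noteq> 0" "l > 0"
    "fst Q = complex_of_real l * fst P"
    using koranyi_gauge_triangle_eq by blast
  define r u where "r = cmod (fst P)" and "u = fst P / complex_of_real r"
  have "r > 0" "cmod u = 1" "u * complex_of_real r = fst P"
    using PQ(3) by (simp_all add: r_def u_def norm_divide)
  have "Im (cnj (fst Q) * fst P) = 0"
    by (simp add: PQ(5) mult.assoc flip: complex_norm_square)
  then have "heis_mult P Q = (u * complex_of_real (r * (1 + l)), 0)"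
    using PQ \<open>u * complex_of_real r = fst P\<close>
    by (simp add: heis_mult_def prod_eq_iff algebra_simps)
  moreover have "P = (u * complex_of_real r, 0)"
    using PQ(1) \<open>u * complex_of_real r = fst P\<close> by (simp add: prod_eq_iff)
  moreover have "y = heis_mult x P" "z = heis_mult x (heis_mult P Q)"
    by (simp_all add: P_def Q_def heis_mult_inv_chain heis_mult_inv_cancel)
  ultimately show ?thesis
    using that[of u r "r * (1 + l)"] \<open>r > 0\<close> \<open>l > 0\<close> \<open>cmod u = 1\<close> by simp
qed

lemma on_Rcircle_sep_if_inverted_triangle_eq:
  fixes a :: heis and M :: "complex^3^3"
  defines "M \<equiv> heis_translation a ** heis_inversion"
  assumes lifts: "heis_lift b = \<kappa>b *s (M *v heis_lift qb)" "heis_lift c = \<kappa>c *s (M *v heis_lift qc)"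
      "heis_lift d = \<kappa>d *s (M *v heis_lift qd)"
    and nonzero: "\<kappa>b \<noteq> 0" "\<kappa>c \<noteq> 0" "\<kappa>d \<noteq> 0"
    and "qb \<noteq> qd" "qd \<noteq> qc" "dK qb qc = dK qb qd + dK qd qc"
  shows "on_Rcircle_sep a d b c"
proof -
  obtain u r s where u: "cmod u = 1" and "0 < r" "r < s"
    and qd: "qd = heis_mult qb (u * complex_of_real r, 0)"
    and qc: "qc = heis_mult qb (u * complex_of_real s, 0)"
    using dK_triangle_eq_imp_horizontal_ray assms(8-10) .
  define B where "B = M ** (heis_translation qb ** heis_rotation u)"
  have "unitary21 B"
    unfolding B_def M_def
    by (intro unitary21_mult unitary21_heis_translation unitary21_heis_inversion
        unitary21_heis_rotation u)
  have B_apply: "B *v v = M *v (heis_translation qb *v (heis_rotation u *v v))" for v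
    by (simp add: B_def flip: matrix_vector_mul_assoc)
  have "heis_lift a = 1 *s (B *v e_inf)"
    by (simp add: B_apply M_def heis_rotation_e_inf heis_translation_e_inf heis_inversion_e_inf
        heis_translation_lift heis_mult_def flip: matrix_vector_mul_assoc)
  moreover have "B *v real_lift t = M *v heis_lift (heis_mult qb (u * complex_of_real t, 0))" for t
    by (simp add: B_apply real_lift_def heis_rotation_lift[OF u] heis_translation_lift)
  then have "heis_lift b = \<kappa>b *s (B *v real_lift 0)" "heis_lift c = \<kappa>c *s (B *v real_lift s)"
    "heis_lift d = \<kappa>d *s (B *v real_lift r)"
    using lifts qc qd by (simp_all add: heis_mult_def)
  ultimately have "Rcircle_frame B a b c d 1 \<kappa>b \<kappa>c \<kappa>d 0 s r"
    using \<open>unitary21 B\<close> nonzero \<open>0 < r\<close> \<open>r < s\<close> by unfold_locales auto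
  moreover have "r \<in> open_segment 0 s"
    using \<open>0 < r\<close> \<open>r < s\<close> by (simp add: open_segment_eq_real_ivl)
  ultimately show ?thesis
    by (rule Rcircle_frame.on_Rcircle_sep_if_between)
qed

lemma ptolemy_inequality_and_equality:
  assumes "distinct [a, b, c, d]"
  shows "dK b c * dK a d \<le> dK b d * dK a c + dK a b * dK c d
    \<and> (dK b c * dK a d = dK b d * dK a c + dK a b * dK c d \<longleftrightarrow> on_Rcircle_sep a d b c)"
proof -
  have "b \<noteq> a" "c \<noteq> a" "d \<noteq> a"
    using assms by auto
  obtain qb \<kappa>b where b: "\<kappa>b \<noteq> 0" "cmod \<kappa>b = (dK a b)\<^sup>2"
      "heis_lift b = \<kappa>b *s ((heis_translation a ** heis_inversion) *v heis_lift qb)"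
    using heis_lift_eq_inversion[OF \<open>b \<noteq> a\<close>] by blast
  obtain qc \<kappa>c where c: "\<kappa>c \<noteq> 0" "cmod \<kappa>c = (dK a c)\<^sup>2"
      "heis_lift c = \<kappa>c *s ((heis_translation a ** heis_inversion) *v heis_lift qc)"
    using heis_lift_eq_inversion[OF \<open>c \<noteq> a\<close>] by blast
  obtain qd \<kappa>d where d: "\<kappa>d \<noteq> 0" "cmod \<kappa>d = (dK a d)\<^sup>2"
      "heis_lift d = \<kappa>d *s ((heis_translation a ** heis_inversion) *v heis_lift qd)"
    using heis_lift_eq_inversion[OF \<open>d \<noteq> a\<close>] by blast
  define X where "X = dK a b * dK a c * dK a d"
  have "X > 0"
    using assms dK_pos by (simp add: X_def)
  have lhs: "dK b c * dK a d = X * dK qb qc"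
    using dK_inversion[OF b(3) c(3) b(2) c(2)] by (simp add: X_def mult_ac)
  have rhs: "dK b d * dK a c + dK a b * dK c d = X * (dK qb qd + dK qd qc)"
    using dK_inversion[OF b(3) d(3) b(2) d(2)] dK_inversion[OF c(3) d(3) c(2) d(2)]
    by (simp add: X_def dK_sym[of qd qc] algebra_simps)
  have "qb \<noteq> qd" "qd \<noteq> qc"
    using heis_lift_smult_same_imp_eq[of b \<kappa>b _ d \<kappa>d] heis_lift_smult_same_imp_eq[of d \<kappa>d _ c \<kappa>c]
      b(3) c(1,3) d(1,3) assms by auto
  then have "on_Rcircle_sep a d b c" if "dK qb qc = dK qb qd + dK qd qc"
    using on_Rcircle_sep_if_inverted_triangle_eq b(1,3) c(1,3) d(1,3) that by blast
  then show ?thesis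
    using lhs rhs \<open>X > 0\<close> dK_triangle[of qb qc qd] ptolemy_eq_if_on_Rcircle_sep[OF assms]
    by auto
qed

theorem theorem3p2:
  fixes p1 p2 p3 p4 :: heis
  assumes "distinct [p1, p2, p3, p4]"
  shows "dK p2 p3 * dK p1 p4 \<le> dK p2 p4 * dK p1 p3 + dK p1 p2 * dK p3 p4
       \<and> dK p1 p3 * dK p2 p4 \<le> dK p1 p2 * dK p3 p4 + dK p2 p3 * dK p1 p4
       \<and> dK p1 p2 * dK p3 p4 \<le> dK p1 p3 * dK p2 p4 + dK p2 p3 * dK p1 p4
       \<and> (dK p2 p3 * dK p1 p4 = dK p2 p4 * dK p1 p3 + dK p1 p2 * dK p3 p4
           \<longleftrightarrow> on_Rcircle_sep p1 p4 p2 p3)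
       \<and> (dK p1 p3 * dK p2 p4 = dK p1 p2 * dK p3 p4 + dK p2 p3 * dK p1 p4
           \<longleftrightarrow> on_Rcircle_sep p1 p3 p2 p4)
       \<and> (dK p1 p2 * dK p3 p4 = dK p1 p3 * dK p2 p4 + dK p2 p3 * dK p1 p4
           \<longleftrightarrow> on_Rcircle_sep p1 p2 p3 p4)"
proof -
  have "distinct [p1, p2, p4, p3]" "distinct [p1, p3, p4, p2]"
    using assms by auto
  note ptolemy = ptolemy_inequality_and_equality[OF assms]
    ptolemy_inequality_and_equality[OF this(1)] ptolemy_inequality_and_equality[OF this(2)]
  have "dK p4 p3 = dK p3 p4" "dK p3 p2 = dK p2 p3" "dK p4 p2 = dK p2 p4"
    by (simp_all add: dK_sym)
  then show ?thesis
    using ptolemy by (simp add: mult.commute add.commute)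
qed

end
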